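(* Let $G=G_{\mathbf E}$ be a multi-GGS group which is not the constant GGS group. Then an element of $\overline D$ normalises $G$ if and only if it normalises $B$, i.e.\ $N_{\overline D}(G)=N_{\overline D}(B)$.
   Context: Let $p$ be an odd prime and $X=\{0,1,\dots,p-1\}$, identified with $\mathbb F_p$. $X^*$ is the $p$-regular rooted tree of finite words over $X$; $\mathrm{Aut}(X^* )$ acts on the right. Sections $g|_v$ are defined by $(vw)^g=v^g\,w^{g|_v}$. $\mathrm{Stab}(n)$ is the stabiliser of all words of length $n$ and $\psi_n\colon\mathrm{Stab}(n)\to\mathrm{Aut}(X^* )^{p^n}$, $g\mapsto(g|_v)_{v\in X^n}$, is an isomorphism. For $\tau\in\mathrm{Sym}(X)$, $\mathrm{rt}(\tau)$ is the rooted automorphism acting as $\tau$ on the first letter and trivially on the rest. Let $a=\mathrm{rt}(\sigma)$ with $\sigma=(0\,1\,\cdots\,p-1)$. Let $\Delta=\{x\mapsto mx\mid m\in\mathbb F_p^\times\}\le\mathrm{Sym}(X)$ and $D=\mathrm{rt}(\Delta)$. Let $\mathbf E\le\mathbb F_p^{p-1}$ be a subspace of dimension $r\ge1$; $E$ is the $r\times(p-1)$ matrix whose rows form a fixed basis of $\mathbf E$, with columns $\mathbf e_1,\dots,\mathbf e_{p-1}$. For $\mathbf n\in\mathbb F_p^r$, $b^{\mathbf n}\in\mathrm{Stab}(1)$ is the unique automorphism with $\psi_1(b^{\mathbf n})=(b^{\mathbf n},a^{\mathbf n\cdot\mathbf e_1},\dots,a^{\mathbf n\cdot\mathbf e_{p-1}})$;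 $B=\{b^{\mathbf n}\}$. $G=G_{\mathbf E}$ is generated by $a$ and $B$; it is the constant GGS group if $\mathbf E=\{(\lambda,\dots,\lambda)\mid\lambda\in\mathbb F_p\}$. $\kappa_n(g)=\psi_n^{-1}(g,\dots,g)$ ($\kappa_0(g)=g$). The diagonal closure of $D$ is $\overline D=\{\prod_{i=0}^\infty\kappa_i(d_i)\mid d_i\in D\}$, the infinite product converging in the topology given by the layer stabilisers. *)

theory Defs
  imports "HOL-Computational_Algebra.Primes" "HOL-Algebra.Group" "HOL-Algebra.Generated_Groups"
begin

text \<open>Letters are naturals below p (identified with F_p); words are lists of letters.
  An automorphism of the tree is a length- and prefix-preserving bijection of the set of
  words, extended by the identity outside the set of words (to make it unique as a function).\<close>

definition words :: "nat \<Rightarrow> nat list set" where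
  "words p = {w. set w \<subseteq> {..<p}}"

definition tree_aut :: "nat \<Rightarrow> (nat list \<Rightarrow> nat list) \<Rightarrow> bool" where
  "tree_aut p f \<longleftrightarrow> bij_betw f (words p) (words p)
     \<and> (\<forall>w\<in>words p. length (f w) = length w)
     \<and> (\<forall>v w. v @ w \<in> words p \<longrightarrow> take (length v) (f (v @ w)) = f v)
     \<and> (\<forall>w. w \<notin> words p \<longrightarrow> f w = w)"

text \<open>Right action: the product g h means first g, then h, i.e. x^(gh) = (x^g)^h.\<close>
definition AutT :: "nat \<Rightarrow> (nat list \<Rightarrow> nat list) monoid" where
  "AutT p = \<lparr>carrier = {f. tree_aut p f}, monoid.mult = (\<lambda>f g. g \<circ> f), one = id\<rparr>"

definition rt :: "nat \<Rightarrow> (nat \<Rightarrow> nat) \<Rightarrow> nat list \<Rightarrow> nat list" where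
  "rt p \<tau> w = (if w \<in> words p then (case w of [] \<Rightarrow> [] | x # v \<Rightarrow> \<tau> x # v) else w)"

definition gen_a :: "nat \<Rightarrow> nat list \<Rightarrow> nat list" where
  "gen_a p = rt p (\<lambda>x. (x + 1) mod p)"

definition apow :: "nat \<Rightarrow> nat \<Rightarrow> nat list \<Rightarrow> nat list" where
  "apow p k = rt p (\<lambda>x. (x + k) mod p)"

text \<open>The automorphism with psi_1 = (itself, a^(e 1), ..., a^(e (p-1))).\<close>
fun bgen :: "nat \<Rightarrow> (nat \<Rightarrow> nat) \<Rightarrow> nat list \<Rightarrow> nat list" where
  "bgen p e [] = []"
| "bgen p e (x # w) = (if x = 0 then 0 # bgen p e w else x # apow p (e x) w)"

definition bauto :: "nat \<Rightarrow> (nat \<Rightarrow> nat) \<Rightarrow> nat list \<Rightarrow> nat list" where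
  "bauto p e w = (if w \<in> words p then bgen p e w else w)"

definition basis_matrix :: "nat \<Rightarrow> nat \<Rightarrow> (nat \<Rightarrow> nat \<Rightarrow> nat) \<Rightarrow> bool" where
  "basis_matrix p r E \<longleftrightarrow>
     (\<forall>i<r. \<forall>j\<in>{1..<p}. E i j < p)
     \<and> (\<forall>c::nat\<Rightarrow>nat. (\<forall>i<r. c i < p) \<longrightarrow>
          (\<forall>j\<in>{1..<p}. (\<Sum>i<r. c i * E i j) mod p = 0) \<longrightarrow> (\<forall>i<r. c i = 0))"

definition row_space :: "nat \<Rightarrow> nat \<Rightarrow> (nat \<Rightarrow> nat \<Rightarrow> nat) \<Rightarrow> (nat \<Rightarrow> nat) set" where
  "row_space p r E = {v. \<exists>c::nat\<Rightarrow>nat. (\<forall>i<r. c i < p) \<and>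
       (\<forall>j. v j = (if j \<in> {1..<p} then (\<Sum>i<r. c i * E i j) mod p else 0))}"

definition const_space :: "nat \<Rightarrow> (nat \<Rightarrow> nat) set" where
  "const_space p = {v. \<exists>c<p. \<forall>j. v j = (if j \<in> {1..<p} then c else 0)}"

definition bvec :: "nat \<Rightarrow> nat \<Rightarrow> (nat \<Rightarrow> nat \<Rightarrow> nat) \<Rightarrow> (nat \<Rightarrow> nat) \<Rightarrow> nat list \<Rightarrow> nat list" where
  "bvec p r E n = bauto p (\<lambda>j. (\<Sum>i<r. n i * E i j) mod p)"

definition Bset :: "nat \<Rightarrow> nat \<Rightarrow> (nat \<Rightarrow> nat \<Rightarrow> nat) \<Rightarrow> (nat list \<Rightarrow> nat list) set" where
  "Bset p r E = {bvec p r E n | n. \<forall>i<r. n i < p}"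

definition GGS :: "nat \<Rightarrow> nat \<Rightarrow> (nat \<Rightarrow> nat \<Rightarrow> nat) \<Rightarrow> (nat list \<Rightarrow> nat list) set" where
  "GGS p r E = generate (AutT p) (insert (gen_a p) (Bset p r E))"

text \<open>kappa_n(g) = psi_n^{-1}(g,...,g): acts as g below every vertex of level n.\<close>
definition kappa :: "nat \<Rightarrow> nat \<Rightarrow> (nat list \<Rightarrow> nat list) \<Rightarrow> nat list \<Rightarrow> nat list" where
  "kappa p n g w = (if w \<in> words p \<and> n \<le> length w then take n w @ g (drop n w) else w)"

text \<open>D = rt(Delta), Delta = {x -> m x | m in F_p^*}; the element rt(x -> m x).\<close>
definition dmul :: "nat \<Rightarrow> nat \<Rightarrow> nat list \<Rightarrow> nat list" where
  "dmul p m = rt p (\<lambda>x. (m * x) mod p)"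

text \<open>Partial products kappa_0(d_0) kappa_1(d_1) ... kappa_(N-1)(d_(N-1)) (right action:
  leftmost factor acts first), with d_i = rt(x -> m_i x).\<close>
fun partprod :: "nat \<Rightarrow> (nat \<Rightarrow> nat) \<Rightarrow> nat \<Rightarrow> nat list \<Rightarrow> nat list" where
  "partprod p m 0 = id"
| "partprod p m (Suc N) = kappa p N (dmul p (m N)) \<circ> partprod p m N"

text \<open>Convergence in the topology given by the level stabilisers: for every level n,
  the partial products eventually agree with g on all words of length at most n.\<close>
definition Dbar :: "nat \<Rightarrow> (nat list \<Rightarrow> nat list) set" where
  "Dbar p = {g. tree_aut p g \<and> (\<exists>m. (\<forall>i. m i \<in> {1..<p}) \<and>
      (\<forall>n. \<exists>N. \<forall>N'\<ge>N. \<forall>w\<in>words p. length w \<le> n \<longrightarrow> partprod p m N' w = g w))}"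

definition normalises :: "nat \<Rightarrow> (nat list \<Rightarrow> nat list) \<Rightarrow> (nat list \<Rightarrow> nat list) set \<Rightarrow> bool" where
  "normalises p d H \<longleftrightarrow> d \<in> carrier (AutT p) \<and>
     {inv\<^bsub>AutT p\<^esub> d \<otimes>\<^bsub>AutT p\<^esub> h \<otimes>\<^bsub>AutT p\<^esub> d | h. h \<in> H} = H"

end

theory Submission
  imports Defs
begin

text \<open>Every element of the diagonal closure multiplies the letter at level \<open>i\<close> of a word by
  some \<open>m\<^sub>i \<in> \<bbbF>\<^sub>p\<^sup>*\<close>. Conjugation by it sends \<open>a\<close> to \<open>a\<^bsup>m\<^sub>0\<^esup>\<close>, so if it
  normalises \<open>B\<close> it normalises \<open>G = \<langle>a, B\<rangle>\<close>. Conversely, it conjugates \<open>b\<^sup>n\<close> to a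
  spinal automorphism: one fixing the words \<open>0\<^sup>k\<close> whose section at \<open>0\<^sup>k x\<close>, \<open>x \<noteq> 0\<close>,
  is a power \<open>a\<^bsup>F k x\<^esup>\<close>. If such an element lies in \<open>G\<close>, write it as a word in \<open>a\<close> and
  \<open>B\<close>; comparing its sections at the first-level vertices shows \<open>F k x \<equiv> N \<cdot> e\<^sub>x\<close>,
  where \<open>N\<close> is the total \<open>B\<close>-exponent of the word, so the element is \<open>b\<^sup>N \<in> B\<close>.
  This needs \<open>N\<close> to be well defined, i.e. a word representing the identity has \<open>B\<close>-exponent
  0: if the word contains a letter \<open>a\<close>, its sections are shorter trivial words whose
  \<open>B\<close>-exponents add up to \<open>N\<close>; otherwise it is \<open>b\<^sup>N\<close>, and evaluating it at the words
  \<open>x 0\<close> gives \<open>N \<cdot> e\<^sub>x = 0\<close> for all \<open>x\<close>, whence \<open>N = 0\<close> by the linear independence of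
  the rows of \<open>E\<close>.\<close>

section \<open>Tree automorphisms\<close>

lemma words_Nil [simp]: "[] \<in> words p"
  by (simp add: words_def)

lemma words_Cons [simp]: "x # w \<in> words p \<longleftrightarrow> x < p \<and> w \<in> words p"
  by (auto simp: words_def)

lemma words_append [simp]: "v @ w \<in> words p \<longleftrightarrow> v \<in> words p \<and> w \<in> words p"
  by (auto simp: words_def)

lemma words_take [simp]: "w \<in> words p \<Longrightarrow> take i w \<in> words p"
  by (auto simp: words_def dest: in_set_takeD)

lemma words_drop [simp]: "w \<in> words p \<Longrightarrow> drop i w \<in> words p"
  by (auto simp: words_def dest: in_set_dropD)

lemma tree_aut_words: "tree_aut p f \<Longrightarrow> w \<in> words p \<Longrightarrow> f w \<in> words p"
  unfolding tree_aut_def by (meson bij_betwE)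

lemma tree_aut_length: "tree_aut p f \<Longrightarrow> w \<in> words p \<Longrightarrow> length (f w) = length w"
  unfolding tree_aut_def by blast

lemma tree_aut_out: "tree_aut p f \<Longrightarrow> w \<notin> words p \<Longrightarrow> f w = w"
  unfolding tree_aut_def by blast

lemma tree_aut_take:
  assumes "tree_aut p f" "w \<in> words p"
  shows "take i (f w) = f (take i w)"
proof (cases "i \<le> length w")
  case True
  have "take (length (take i w)) (f (take i w @ drop i w)) = f (take i w)"
    using assms unfolding tree_aut_def by (metis append_take_drop_id)
  with True show ?thesis by simp
next
  case False
  with assms show ?thesis by (simp add: tree_aut_length)
qed

lemma tree_autI:
  assumes "\<And>w. w \<in> words p \<Longrightarrow> f w \<in> words p \<and> length (f w) = length w"
    and "\<And>w i. w \<in> words p \<Longrightarrow> take i (f w) = f (take i w)"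
    and "\<And>w. w \<notin> words p \<Longrightarrow> f w = w"
    and "\<And>w. w \<in> words p \<Longrightarrow> g w \<in> words p \<and> f (g w) = w \<and> g (f w) = w"
  shows "tree_aut p f"
  unfolding tree_aut_def
proof (intro conjI ballI allI impI)
  show "bij_betw f (words p) (words p)"
    by (rule bij_betw_byWitness[where f'=g]) (use assms(1,4) in auto)
  fix v w assume "v @ w \<in> words p"
  then show "take (length v) (f (v @ w)) = f v" using assms(2) by simp
qed (use assms(1,3) in auto)

lemma tree_aut_ext:
  assumes "tree_aut p f" "tree_aut p g" "\<And>w. w \<in> words p \<Longrightarrow> f w = g w"
  shows "f = g"
proof
  fix w show "f w = g w" using assms by (cases "w \<in> words p") (auto simp: tree_aut_out)
qed

lemma tree_aut_id: "tree_aut p id"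
  by (rule tree_autI[where g=id]) auto

lemma tree_aut_comp:
  assumes f: "tree_aut p f" and g: "tree_aut p g"
  shows "tree_aut p (g \<circ> f)"
proof -
  have "bij_betw f (words p) (words p)" "bij_betw g (words p) (words p)"
    using f g unfolding tree_aut_def by blast+
  then obtain f' g' where f': "\<forall>w\<in>words p. f' w \<in> words p \<and> f (f' w) = w \<and> f' (f w) = w"
    and g': "\<forall>w\<in>words p. g' w \<in> words p \<and> g (g' w) = w \<and> g' (g w) = w"
    unfolding bij_betw_iff_bijections by metis
  show ?thesis
  proof (rule tree_autI[where g="f' \<circ> g'"])
    fix w assume w: "w \<in> words p"
    show "(g \<circ> f) w \<in> words p \<and> length ((g \<circ> f) w) = length w"
      using w f g by (simp add: tree_aut_words tree_aut_length)
    show "(f' \<circ> g') w \<in> words p \<and> (g \<circ> f) ((f' \<circ> g') w) = w \<and> (f' \<circ> g') ((g \<circ> f) w) = w"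
      using w f' g' f by (simp add: tree_aut_words)
    fix i show "take i ((g \<circ> f) w) = (g \<circ> f) (take i w)"
      using w f g by (simp add: tree_aut_take tree_aut_words)
  qed (use f g in \<open>simp add: tree_aut_out\<close>)
qed

lemma tree_aut_inverse:
  assumes "tree_aut p f"
  shows "\<exists>g. tree_aut p g \<and> f \<circ> g = id"
proof -
  define g where "g w = (if w \<in> words p then inv_into (words p) f w else w)" for w
  have bij: "bij_betw f (words p) (words p)" using assms unfolding tree_aut_def by blast
  have g: "g w \<in> words p" "f (g w) = w" "g (f w) = w" if "w \<in> words p" for w
    using that bij assms by (auto simp: g_def bij_betw_def inv_into_into f_inv_into_f tree_aut_words)
  have "tree_aut p g"
  proof (rule tree_autI[where g=f])
    fix w i assume w: "w \<in> words p"
    show "g w \<in> words p \<and> length (g w) = length w"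
      using g[OF w] tree_aut_length[OF assms] by metis
    have "f (take i (g w)) = take i w" using tree_aut_take[OF assms g(1)[OF w]] g[OF w] by simp
    then show "take i (g w) = g (take i w)" using g(3)[of "take i (g w)"] g(1)[OF w] by simp
  next
    fix w assume "w \<notin> words p"
    then show "g w = w" by (simp add: g_def)
  next
    fix w assume "w \<in> words p"
    then show "f w \<in> words p \<and> g (f w) = w \<and> f (g w) = w"
      using g assms by (simp add: tree_aut_words)
  qed
  moreover have "f \<circ> g = id"
    by (rule tree_aut_ext[OF tree_aut_comp[OF \<open>tree_aut p g\<close> assms] tree_aut_id]) (simp add: g)
  ultimately show ?thesis by blast
qed

lemma carrier_AutT [simp]: "f \<in> carrier (AutT p) \<longleftrightarrow> tree_aut p f"
  by (simp add: AutT_def)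

lemma mult_AutT [simp]: "f \<otimes>\<^bsub>AutT p\<^esub> g = g \<circ> f"
  by (simp add: AutT_def)

lemma one_AutT [simp]: "\<one>\<^bsub>AutT p\<^esub> = id"
  by (simp add: AutT_def)

lemma AutT_group: "group (AutT p)"
proof (rule groupI)
  fix x assume "x \<in> carrier (AutT p)"
  then obtain y where "tree_aut p y" "x \<circ> y = id" using tree_aut_inverse by auto
  then show "\<exists>y\<in>carrier (AutT p). y \<otimes>\<^bsub>AutT p\<^esub> x = \<one>\<^bsub>AutT p\<^esub>" by auto
qed (simp_all add: tree_aut_comp tree_aut_id comp_assoc)

lemma inv_AutT:
  assumes "tree_aut p f" "tree_aut p g" "\<And>w. w \<in> words p \<Longrightarrow> g (f w) = w"
  shows "inv\<^bsub>AutT p\<^esub> f = g"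
proof -
  have "f \<circ> g = id"
  proof (rule tree_aut_ext[OF tree_aut_comp[OF assms(2,1)] tree_aut_id])
    fix w assume "w \<in> words p"
    then obtain z where "z \<in> words p" "f z = w"
      using assms(1) unfolding tree_aut_def by (metis bij_betw_iff_bijections)
    then show "(f \<circ> g) w = id w" using assms(3) by auto
  qed
  then show ?thesis
    by (intro group.inv_equality[OF AutT_group]) (use assms in simp_all)
qed

lemma add_compl_mod_eq_0: "(p::nat) > 0 \<Longrightarrow> (k + (p - k mod p)) mod p = 0"
  by (metis add.commute le_add_diff_inverse2 mod_add_left_eq mod_less_divisor mod_self
      order_less_imp_le)

lemma rt_out: "w \<notin> words p \<Longrightarrow> rt p \<tau> w = w"
  by (simp add: rt_def)

lemma apow_Nil [simp]: "apow p k [] = []"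
  by (simp add: apow_def rt_def)

lemma apow_Cons [simp]: "x # w \<in> words p \<Longrightarrow> apow p k (x # w) = ((x + k) mod p) # w"
  by (simp add: apow_def rt_def)

lemma apow_out: "w \<notin> words p \<Longrightarrow> apow p k w = w"
  by (simp add: apow_def rt_out)

lemma apow_in_words [simp]: "w \<in> words p \<Longrightarrow> apow p k w \<in> words p"
  by (cases w) auto

lemma apow_length [simp]: "length (apow p k w) = length w"
  by (cases "w \<in> words p"; cases w) (auto simp: apow_out)

lemma apow_apow: "w \<in> words p \<Longrightarrow> apow p k (apow p k' w) = apow p (k' + k) w"
  by (cases w) (auto simp: mod_add_left_eq add.assoc)

lemma apow_mod:
  assumes "w \<in> words p" "k mod p = k' mod p"
  shows "apow p k w = apow p k' w"
  using assms by (cases w) (auto simp: mod_add_right_eq[of _ k, symmetric] mod_add_right_eq[of _ k'])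

lemma apow_mod_zero: "w \<in> words p \<Longrightarrow> k mod p = 0 \<Longrightarrow> apow p k w = w"
  by (cases w) (auto simp: mod_add_right_eq[of _ k, symmetric])

lemma apow_take: "w \<in> words p \<Longrightarrow> take i (apow p k w) = apow p k (take i w)"
  by (cases w; cases i) auto

lemma tree_aut_apow:
  assumes "p > 0"
  shows "tree_aut p (apow p k)"
proof (rule tree_autI[where g="apow p (p - k mod p)"])
  fix w assume "w \<in> words p"
  then show "apow p (p - k mod p) w \<in> words p \<and> apow p k (apow p (p - k mod p) w) = w \<and>
      apow p (p - k mod p) (apow p k w) = w"
    using add_compl_mod_eq_0[OF assms, of k] by (simp add: apow_apow apow_mod_zero add.commute)
qed (auto simp: apow_take apow_out)

lemma gen_a_eq_apow: "gen_a p = apow p 1"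
  by (simp add: gen_a_def apow_def)

lemma bauto_Nil [simp]: "bauto p e [] = []"
  by (simp add: bauto_def)

lemma bauto_Cons:
  "x # w \<in> words p \<Longrightarrow> bauto p e (x # w) = (if x = 0 then 0 # bauto p e w else x # apow p (e x) w)"
  by (simp add: bauto_def)

lemma bauto_out: "w \<notin> words p \<Longrightarrow> bauto p e w = w"
  by (simp add: bauto_def)

lemma bauto_in_words [simp]: "w \<in> words p \<Longrightarrow> bauto p e w \<in> words p"
  by (induction w) (auto simp: bauto_Cons)

lemma bauto_length [simp]: "w \<in> words p \<Longrightarrow> length (bauto p e w) = length w"
  by (induction w) (auto simp: bauto_Cons)

lemma bauto_take: "w \<in> words p \<Longrightarrow> take i (bauto p e w) = bauto p e (take i w)"
proof (induction w arbitrary: i)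
  case (Cons x w)
  then show ?case by (cases i) (auto simp: bauto_Cons apow_take)
qed simp

lemma bauto_bauto:
  "w \<in> words p \<Longrightarrow> (\<And>x. x \<in> {1..<p} \<Longrightarrow> (e x + e' x) mod p = 0) \<Longrightarrow> bauto p e' (bauto p e w) = w"
  by (induction w) (auto simp: bauto_Cons apow_apow apow_mod_zero add.commute)

lemma bauto_cong:
  assumes "\<And>x. x \<in> {1..<p} \<Longrightarrow> e x mod p = e' x mod p"
  shows "bauto p e = bauto p e'"
proof
  fix w show "bauto p e w = bauto p e' w"
  proof (cases "w \<in> words p")
    case True
    then show ?thesis
      by (induction w) (auto simp: bauto_Cons intro!: apow_mod assms)
  qed (simp add: bauto_out)
qed

lemma tree_aut_bauto:
  assumes "p > 0"
  shows "tree_aut p (bauto p e)"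
proof (rule tree_autI[where g="bauto p (\<lambda>x. p - e x mod p)"])
  fix w assume "w \<in> words p"
  then show "bauto p (\<lambda>x. p - e x mod p) w \<in> words p
      \<and> bauto p e (bauto p (\<lambda>x. p - e x mod p) w) = w \<and> bauto p (\<lambda>x. p - e x mod p) (bauto p e w) = w"
    using add_compl_mod_eq_0[OF assms] by (simp add: bauto_bauto add.commute)
qed (auto simp: bauto_take bauto_out)

fun spinal_aut :: "nat \<Rightarrow> (nat \<Rightarrow> nat \<Rightarrow> nat) \<Rightarrow> nat list \<Rightarrow> nat list" where
  "spinal_aut p F [] = []"
| "spinal_aut p F (x # w) =
    (if x = 0 then 0 # spinal_aut p (\<lambda>k. F (Suc k)) w else x # apow p (F 0 x) w)"

lemma spinal_aut_eq_bauto: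
  "(\<And>k x. x \<in> {1..<p} \<Longrightarrow> F k x mod p = e x mod p) \<Longrightarrow> w \<in> words p \<Longrightarrow>
    spinal_aut p F w = bauto p e w"
proof (induction w arbitrary: F)
  case (Cons x w)
  then show ?case
    by (cases "x = 0") (auto simp: bauto_Cons intro!: apow_mod)
qed simp

text \<open>The element \<open>\<Prod>\<^sub>i \<kappa>\<^sub>i(rt(x \<mapsto> m\<^sub>i x))\<close> of the diagonal closure
  multiplies the letter at level \<open>i\<close> by \<open>m\<^sub>i\<close>.\<close>

fun scale_word :: "nat \<Rightarrow> (nat \<Rightarrow> nat) \<Rightarrow> nat list \<Rightarrow> nat list" where
  "scale_word p m [] = []"
| "scale_word p m (x # w) = ((m 0 * x) mod p) # scale_word p (\<lambda>i. m (Suc i)) w"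

definition scale_aut :: "nat \<Rightarrow> (nat \<Rightarrow> nat) \<Rightarrow> nat list \<Rightarrow> nat list" where
  "scale_aut p m w = (if w \<in> words p then scale_word p m w else w)"

definition inverse_seqs :: "nat \<Rightarrow> (nat \<Rightarrow> nat) \<Rightarrow> (nat \<Rightarrow> nat) \<Rightarrow> bool" where
  "inverse_seqs p m m' \<longleftrightarrow> (\<forall>i. (m i * m' i) mod p = 1)"

lemma inverse_seqs_sym: "inverse_seqs p m m' \<Longrightarrow> inverse_seqs p m' m"
  by (simp add: inverse_seqs_def mult.commute)

lemma inverse_seqs_Suc: "inverse_seqs p m m' \<Longrightarrow> inverse_seqs p (\<lambda>i. m (Suc i)) (\<lambda>i. m' (Suc i))"
  by (simp add: inverse_seqs_def)

lemma mult_mod_inverse_cancel: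
  assumes "(a * b) mod p = (1::nat)"
  shows "(b * (((a * x) mod p + k) mod p)) mod p = (x + b * k) mod p"
proof -
  have "(b * (((a * x) mod p + k) mod p)) mod p = (b * ((a * x) mod p) + b * k) mod p"
    by (simp add: mod_mult_right_eq distrib_left)
  also have "\<dots> = ((b * ((a * x) mod p)) mod p + b * k) mod p"
    by (rule mod_add_left_eq[symmetric])
  also have "(b * ((a * x) mod p)) mod p = ((a * b) * x) mod p"
    by (simp add: mod_mult_right_eq ac_simps)
  also have "\<dots> = x mod p"
    using assms by (metis mod_mult_left_eq mult_1)
  finally show ?thesis by (simp add: mod_add_left_eq)
qed

lemma scale_word_in_words [simp]: "p > 0 \<Longrightarrow> w \<in> words p \<Longrightarrow> scale_word p m w \<in> words p"
  by (induction w arbitrary: m) auto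

lemma scale_word_length [simp]: "length (scale_word p m w) = length w"
  by (induction w arbitrary: m) auto

lemma scale_word_take: "take i (scale_word p m w) = scale_word p m (take i w)"
  by (induction w arbitrary: m i) (auto simp: take_Cons split: nat.split)

lemma scale_word_inverse:
  "inverse_seqs p m m' \<Longrightarrow> w \<in> words p \<Longrightarrow> scale_word p m' (scale_word p m w) = w"
proof (induction w arbitrary: m m')
  case (Cons x w)
  then have "(m 0 * m' 0) mod p = 1" by (simp add: inverse_seqs_def)
  then show ?case
    using Cons mult_mod_inverse_cancel[of "m 0" "m' 0" p x 0] by (simp add: inverse_seqs_Suc)
qed simp

lemma tree_aut_scale_aut:
  assumes "p > 0" "inverse_seqs p m m'"
  shows "tree_aut p (scale_aut p m)"
proof (rule tree_autI[where g="scale_aut p m'"])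
  fix w assume "w \<in> words p"
  then show "scale_aut p m' w \<in> words p \<and> scale_aut p m (scale_aut p m' w) = w
      \<and> scale_aut p m' (scale_aut p m w) = w"
    using assms inverse_seqs_sym[OF assms(2)] by (simp add: scale_aut_def scale_word_inverse)
next
  fix w assume "w \<in> words p"
  then show "scale_aut p m w \<in> words p \<and> length (scale_aut p m w) = length w"
    using assms by (simp add: scale_aut_def)
qed (auto simp: scale_aut_def scale_word_take)

lemma inv_scale_aut:
  assumes "p > 0" "inverse_seqs p m m'"
  shows "inv\<^bsub>AutT p\<^esub> (scale_aut p m) = scale_aut p m'"
  using assms inverse_seqs_sym[OF assms(2)]
  by (intro inv_AutT tree_aut_scale_aut) (auto simp: scale_aut_def scale_word_inverse)

lemma scale_word_conj_apow:
  assumes "p > 0" "inverse_seqs p m m'" "w \<in> words p"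
  shows "scale_word p m (apow p k (scale_word p m' w)) = apow p (m 0 * k) w"
proof (cases w)
  case (Cons z v)
  have "(m' 0 * m 0) mod p = 1" using assms(2) by (simp add: inverse_seqs_def mult.commute)
  then show ?thesis
    using Cons assms mult_mod_inverse_cancel[of "m' 0" "m 0" p z k]
      scale_word_inverse[OF inverse_seqs_Suc[OF inverse_seqs_sym[OF assms(2)]]]
    by simp
qed simp

lemma scale_conj_apow:
  assumes "p > 0" "inverse_seqs p m m'"
  shows "scale_aut p m \<circ> apow p k \<circ> scale_aut p m' = apow p (m 0 * k)"
proof (rule tree_aut_ext)
  show "tree_aut p (scale_aut p m \<circ> apow p k \<circ> scale_aut p m')"
    using assms inverse_seqs_sym[OF assms(2)]
    by (intro tree_aut_comp tree_aut_scale_aut tree_aut_apow)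
  show "tree_aut p (apow p (m 0 * k))" by (rule tree_aut_apow[OF assms(1)])
  fix w assume "w \<in> words p"
  then show "(scale_aut p m \<circ> apow p k \<circ> scale_aut p m') w = apow p (m 0 * k) w"
    using assms scale_word_conj_apow by (simp add: scale_aut_def)
qed

lemma scale_conj_bauto:
  assumes "p > 0" "inverse_seqs p m m'" "w \<in> words p"
  shows "(scale_aut p m \<circ> bauto p e \<circ> scale_aut p m') w
    = spinal_aut p (\<lambda>k x. m (Suc k) * e ((m' k * x) mod p)) w"
proof -
  have "scale_word p m (bauto p e (scale_word p m' w))
      = spinal_aut p (\<lambda>k x. m (Suc k) * e ((m' k * x) mod p)) w"
    using assms(2,3)
  proof (induction w arbitrary: m m')
    case (Cons x w)
    let ?y = "(m' 0 * x) mod p"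
    have inv0: "(m' 0 * m 0) mod p = 1" using Cons.prems(1) by (simp add: inverse_seqs_def mult.commute)
    then have y_back: "(m 0 * ?y) mod p = x"
      using mult_mod_inverse_cancel[of "m' 0" "m 0" p x 0] Cons.prems by simp
    then have "?y = 0 \<longleftrightarrow> x = 0" by auto
    then show ?case
      using Cons assms(1) y_back inverse_seqs_Suc[OF Cons.prems(1)]
        scale_word_conj_apow[OF assms(1) inverse_seqs_Suc[OF Cons.prems(1)]]
      by (simp add: bauto_Cons)
  qed simp
  then show ?thesis using assms by (simp add: scale_aut_def)
qed

section \<open>The diagonal closure of D\<close>

lemma kappa_Cons: "y # u \<in> words p \<Longrightarrow> kappa p (Suc N) g (y # u) = y # kappa p N g u"
  by (simp add: kappa_def)

lemma partprod_in_words: "p > 0 \<Longrightarrow> w \<in> words p \<Longrightarrow> partprod p m N w \<in> words p"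
proof (induction N arbitrary: w)
  case (Suc N)
  have "dmul p k v \<in> words p" if "v \<in> words p" for k v
    using that \<open>p > 0\<close> by (cases v) (auto simp: dmul_def rt_def)
  then show ?case using Suc by (auto simp: kappa_def)
qed simp

lemma partprod_Nil: "partprod p m N [] = []"
  by (induction N) (auto simp: kappa_def dmul_def rt_def)

lemma partprod_Cons:
  assumes "p > 0" "x # w \<in> words p"
  shows "partprod p m (Suc N) (x # w) = ((m 0 * x) mod p) # partprod p (\<lambda>i. m (Suc i)) N w"
proof (induction N)
  case 0
  then show ?case using assms by (simp add: kappa_def dmul_def rt_def)
next
  case (Suc N)
  have "((m 0 * x) mod p) # partprod p (\<lambda>i. m (Suc i)) N w \<in> words p"
    using assms partprod_in_words[OF assms(1)] by simp
  then show ?case using Suc by (simp add: kappa_Cons)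
qed

lemma partprod_eq_scale_word:
  "p > 0 \<Longrightarrow> w \<in> words p \<Longrightarrow> length w \<le> N \<Longrightarrow> partprod p m N w = scale_word p m w"
proof (induction w arbitrary: m N)
  case (Cons x w)
  then obtain N' where "N = Suc N'" by (cases N) auto
  then show ?case using Cons partprod_Cons[OF Cons.prems(1,2)] by simp
qed (simp add: partprod_Nil)

lemma Dbar_eq_scale_aut:
  assumes "p > 0" "d \<in> Dbar p"
  shows "\<exists>m. (\<forall>i. m i \<in> {1..<p}) \<and> d = scale_aut p m"
proof -
  obtain m where m: "\<forall>i. m i \<in> {1..<p}" and d: "tree_aut p d"
    and conv: "\<forall>n. \<exists>N. \<forall>N'\<ge>N. \<forall>w\<in>words p. length w \<le> n \<longrightarrow> partprod p m N' w = d w"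
    using assms(2) unfolding Dbar_def by blast
  have "d w = scale_aut p m w" for w
  proof (cases "w \<in> words p")
    case True
    obtain N where "\<forall>N'\<ge>N. \<forall>v\<in>words p. length v \<le> length w \<longrightarrow> partprod p m N' v = d v"
      using conv by blast
    then have "partprod p m (max N (length w)) w = d w" using True by simp
    then show ?thesis
      using partprod_eq_scale_word[OF assms(1) True] True by (simp add: scale_aut_def)
  qed (simp add: scale_aut_def tree_aut_out[OF d])
  then show ?thesis using m by blast
qed

lemma prime_mod_inverse_exists:
  assumes "prime (p::nat)" "a \<in> {1..<p}"
  shows "\<exists>b. (a * b) mod p = 1"
proof -
  have "coprime p a"
    using assms by (intro prime_imp_coprime_nat) (auto dest: dvd_imp_le)
  then obtain x y where "a * x = p * y + 1"
    using bezout_nat[of a p] assms(2) by (auto simp: coprime_iff_gcd_eq_1 gcd.commute)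
  then have "(a * x) mod p = (1 + y * p) mod p" by (simp add: mult.commute)
  then show ?thesis using prime_gt_1_nat[OF assms(1)] by (metis mod_less mod_mult_self1)
qed

lemma Dbar_eq_scale_aut_inverse:
  assumes "prime p" "d \<in> Dbar p"
  shows "\<exists>m m'. inverse_seqs p m m' \<and> d = scale_aut p m"
proof -
  obtain m where m: "\<forall>i. m i \<in> {1..<p}" and d: "d = scale_aut p m"
    using Dbar_eq_scale_aut assms prime_gt_0_nat by blast
  then have "\<forall>i. \<exists>b. (m i * b) mod p = 1" using prime_mod_inverse_exists[OF assms(1)] by blast
  then obtain m' where "\<forall>i. (m i * m' i) mod p = 1" by metis
  then show ?thesis using d by (auto simp: inverse_seqs_def)
qed

lemma (in group) conj_image_eq_iff:
  assumes "d \<in> carrier G" "H \<subseteq> carrier G"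
  shows "{inv d \<otimes> h \<otimes> d | h. h \<in> H} = H \<longleftrightarrow>
    (\<forall>h\<in>H. inv d \<otimes> h \<otimes> d \<in> H) \<and> (\<forall>h\<in>H. d \<otimes> h \<otimes> inv d \<in> H)"
proof -
  have cancel_left: "x \<otimes> (inv x \<otimes> z) = z" "inv x \<otimes> (x \<otimes> z) = z"
    if "x \<in> carrier G" "z \<in> carrier G" for x z
    using that by (simp_all add: m_assoc[symmetric])
  have conj_cancel: "d \<otimes> (inv d \<otimes> h \<otimes> d) \<otimes> inv d = h" "h = inv d \<otimes> (d \<otimes> h \<otimes> inv d) \<otimes> d"
    if "h \<in> H" for h
    using that assms by (auto simp: m_assoc cancel_left)
  show ?thesis
  proof
    assume eq: "{inv d \<otimes> h \<otimes> d | h. h \<in> H} = H"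
    have "d \<otimes> h \<otimes> inv d \<in> H" if "h \<in> H" for h
    proof -
      obtain h' where "h' \<in> H" "h = inv d \<otimes> h' \<otimes> d" using eq \<open>h \<in> H\<close> by auto
      then show ?thesis using conj_cancel(1) by simp
    qed
    moreover have "inv d \<otimes> h \<otimes> d \<in> H" if "h \<in> H" for h
      using eq that by auto
    ultimately show "(\<forall>h\<in>H. inv d \<otimes> h \<otimes> d \<in> H) \<and> (\<forall>h\<in>H. d \<otimes> h \<otimes> inv d \<in> H)"
      by blast
  next
    assume closed: "(\<forall>h\<in>H. inv d \<otimes> h \<otimes> d \<in> H) \<and> (\<forall>h\<in>H. d \<otimes> h \<otimes> inv d \<in> H)"
    show "{inv d \<otimes> h \<otimes> d | h. h \<in> H} = H"
    proof (intro equalityI subsetI)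
      fix h assume "h \<in> H"
      then have "d \<otimes> h \<otimes> inv d \<in> H" using closed by blast
      with conj_cancel(2)[OF \<open>h \<in> H\<close>] show "h \<in> {inv d \<otimes> h \<otimes> d | h. h \<in> H}" by blast
    qed (use closed in auto)
  qed
qed

lemma (in group) conj_generate_closed:
  assumes "d \<in> carrier G" "S \<subseteq> carrier G" "\<And>s. s \<in> S \<Longrightarrow> inv d \<otimes> s \<otimes> d \<in> generate G S"
  shows "g \<in> generate G S \<Longrightarrow> inv d \<otimes> g \<otimes> d \<in> generate G S"
proof (induction rule: generate.induct)
  case one
  then show ?case using assms(1) by (simp add: generate.one)
next
  case (incl h)
  then show ?case by (rule assms(3))
next
  case (inv h)
  then have "inv d \<otimes> inv h \<otimes> d = inv (inv d \<otimes> h \<otimes> d)"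
    using assms(1,2) by (auto simp: m_assoc inv_mult_group)
  then show ?case
    using inv assms by (simp add: subgroup.m_inv_closed[OF generate_is_subgroup[OF assms(2)]])
next
  case (eng h1 h2)
  then have "h1 \<in> carrier G" "h2 \<in> carrier G" using generate_in_carrier[OF assms(2)] by auto
  then have "inv d \<otimes> (h1 \<otimes> h2) \<otimes> d = (inv d \<otimes> h1 \<otimes> d) \<otimes> (inv d \<otimes> h2 \<otimes> d)"
    using assms(1) by (simp add: m_assoc[symmetric]) (simp add: m_assoc)
  then show ?case
    using eng.IH subgroup.m_closed[OF generate_is_subgroup[OF assms(2)]] by simp
qed

lemma normalises_scale_aut_iff:
  assumes "p > 0" "inverse_seqs p m m'" "H \<subseteq> carrier (AutT p)"
  shows "normalises p (scale_aut p m) H \<longleftrightarrow>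
    (\<forall>h\<in>H. scale_aut p m \<circ> h \<circ> scale_aut p m' \<in> H) \<and> (\<forall>h\<in>H. scale_aut p m' \<circ> h \<circ> scale_aut p m \<in> H)"
proof -
  have d: "scale_aut p m \<in> carrier (AutT p)" using tree_aut_scale_aut[OF assms(1,2)] by simp
  have conj: "inv\<^bsub>AutT p\<^esub> scale_aut p m \<otimes>\<^bsub>AutT p\<^esub> h \<otimes>\<^bsub>AutT p\<^esub> scale_aut p m
      = scale_aut p m \<circ> h \<circ> scale_aut p m'"
    "scale_aut p m \<otimes>\<^bsub>AutT p\<^esub> h \<otimes>\<^bsub>AutT p\<^esub> inv\<^bsub>AutT p\<^esub> scale_aut p m
      = scale_aut p m' \<circ> h \<circ> scale_aut p m" for h
    by (simp_all only: inv_scale_aut[OF assms(1,2)] mult_AutT comp_assoc)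
  show ?thesis
    unfolding normalises_def conj
    using group.conj_image_eq_iff[OF AutT_group d assms(3), unfolded conj] d by (simp only: simp_thms)
qed

section \<open>Words in the generators and their sections\<close>

datatype gen_letter = is_Apow: Apow nat | Bvec "nat \<Rightarrow> nat"

fun a_exp :: "gen_letter list \<Rightarrow> nat" where
  "a_exp [] = 0"
| "a_exp (Apow k # ls) = k + a_exp ls"
| "a_exp (Bvec n # ls) = a_exp ls"

fun b_exp :: "gen_letter list \<Rightarrow> nat \<Rightarrow> nat" where
  "b_exp [] i = 0"
| "b_exp (Apow k # ls) i = b_exp ls i"
| "b_exp (Bvec n # ls) i = n i + b_exp ls i"

lemma b_exp_append: "b_exp (xs @ ys) i = b_exp xs i + b_exp ys i"
  by (induction xs rule: a_exp.induct) auto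

lemma sum_mod_shift:
  assumes "(p::nat) > 0"
  shows "(\<Sum>x<p. f ((x + k) mod p)) = (\<Sum>x<p. f x)"
proof (rule sum.reindex_bij_betw)
  have cancel: "((x + a) mod p + b) mod p = x" if "x < p" "(a + b) mod p = 0" for x a b
  proof -
    have "((x + a) mod p + b) mod p = (x + (a + b) mod p) mod p"
      by (simp add: mod_add_left_eq mod_add_right_eq add.assoc)
    then show ?thesis using that by simp
  qed
  have inv: "(k + (p - k mod p)) mod p = 0" "(p - k mod p + k) mod p = 0"
    using add_compl_mod_eq_0[OF assms, of k] by (simp_all add: add.commute)
  show "bij_betw (\<lambda>x. (x + k) mod p) {..<p} {..<p}"
  proof (rule bij_betw_byWitness[where f'="\<lambda>x. (x + (p - k mod p)) mod p"])
    show "\<forall>x\<in>{..<p}. ((x + k) mod p + (p - k mod p)) mod p = x"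
      using cancel[OF _ inv(1)] by blast
    show "\<forall>x\<in>{..<p}. ((x + (p - k mod p)) mod p + k) mod p = x"
      using cancel[OF _ inv(2)] by blast
  qed (use assms in auto)
qed

lemma mod_sub_shift:
  assumes "(p::nat) > 0" "j < p"
  shows "((x + k) mod p + p - (j + k) mod p) mod p = (x + p - j) mod p"
proof -
  have "(j + k) mod p \<le> (x + k) mod p + p" using assms by (simp add: less_imp_le trans_le_add2)
  then have "int (((x + k) mod p + p - (j + k) mod p) mod p)
      = ((int (x + k) mod int p - int (j + k) mod int p) + int p) mod int p"
    by (simp add: zmod_int algebra_simps)
  also have "\<dots> = (int (x + k) - int (j + k)) mod int p" by (simp add: mod_diff_eq)
  also have "\<dots> = ((int x - int j) + int p) mod int p" by simp
  also have "\<dots> = int ((x + p - j) mod p)" using assms by (simp add: zmod_int algebra_simps)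
  finally show ?thesis by simp
qed

lemma sum_lessThan_split_zero: "(p::nat) > 0 \<Longrightarrow> (\<Sum>x<p. f x) = f 0 + (\<Sum>x\<in>{1..<p}. f x)"
  by (metis atLeast0LessThan sum.atLeast_Suc_lessThan One_nat_def)

locale multi_ggs =
  fixes p r :: nat and E :: "nat \<Rightarrow> nat \<Rightarrow> nat"
  assumes prime_p: "prime p" and basis: "basis_matrix p r E"
begin

lemma p_pos: "p > 0"
  using prime_p prime_gt_0_nat by blast

text \<open>\<open>col_dot n j\<close> is \<open>n \<cdot> e\<^sub>j\<close>; there is no column \<open>e\<^sub>0\<close>, and the value 0
  there records that \<open>b\<^sup>n\<close> contributes no power of \<open>a\<close> at the vertex 0.\<close>

definition col_dot :: "(nat \<Rightarrow> nat) \<Rightarrow> nat \<Rightarrow> nat" where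
  "col_dot n j = (if j = 0 then 0 else (\<Sum>i<r. n i * E i j))"

lemma col_dot_add: "col_dot (\<lambda>i. a i + b i) j = col_dot a j + col_dot b j"
  by (simp add: col_dot_def sum.distrib algebra_simps)

lemma col_dot_zero [simp]: "col_dot (\<lambda>i. 0) j = 0"
  by (simp add: col_dot_def)

lemma col_dot_cong:
  assumes "\<And>i. i < r \<Longrightarrow> a i mod p = b i mod p"
  shows "col_dot a j mod p = col_dot b j mod p"
proof -
  have "(\<Sum>i<r. a i * E i j) mod p = (\<Sum>i<r. a i * E i j mod p) mod p"
    by (rule mod_sum_eq[symmetric])
  also have "(\<Sum>i<r. a i * E i j mod p) = (\<Sum>i<r. b i * E i j mod p)"
    using assms by (intro sum.cong) (auto intro: mod_mult_cong)
  also have "(\<Sum>i<r. b i * E i j mod p) mod p = (\<Sum>i<r. b i * E i j) mod p"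
    by (rule mod_sum_eq)
  finally show ?thesis by (simp add: col_dot_def)
qed

lemma col_dot_eq_zero_imp_zero:
  assumes "\<And>j. j \<in> {1..<p} \<Longrightarrow> col_dot n j mod p = 0" "i < r"
  shows "n i mod p = 0"
proof -
  have indep: "\<And>c. (\<forall>i<r. c i < p) \<Longrightarrow> (\<forall>j\<in>{1..<p}. (\<Sum>i<r. c i * E i j) mod p = 0)
      \<Longrightarrow> (\<forall>i<r. c i = 0)"
    using basis unfolding basis_matrix_def by blast
  have "(\<Sum>i<r. n i mod p * E i j) mod p = 0" if "j \<in> {1..<p}" for j
  proof -
    have "(\<Sum>i<r. n i mod p * E i j) mod p = col_dot (\<lambda>i. n i mod p) j mod p"
      using that by (simp add: col_dot_def)
    also have "\<dots> = 0" using col_dot_cong[of "\<lambda>i. n i mod p" n j] assms(1)[OF that] by simp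
    finally show ?thesis .
  qed
  then have "\<forall>i<r. n i mod p = 0" using p_pos by (intro indep) auto
  then show ?thesis using assms(2) by blast
qed

lemma bvec_eq_bauto: "bvec p r E n = bauto p (\<lambda>j. col_dot n j mod p)"
  unfolding bvec_def by (rule bauto_cong) (simp add: col_dot_def)

fun letter_aut :: "gen_letter \<Rightarrow> nat list \<Rightarrow> nat list" where
  "letter_aut (Apow k) = apow p k"
| "letter_aut (Bvec n) = bvec p r E n"

fun word_aut :: "gen_letter list \<Rightarrow> nat list \<Rightarrow> nat list" where
  "word_aut [] = id"
| "word_aut (l # ls) = word_aut ls \<circ> letter_aut l"

fun section_word :: "nat \<Rightarrow> gen_letter list \<Rightarrow> gen_letter list" where
  "section_word y [] = []"
| "section_word y (Apow k # ls) = section_word ((y + k) mod p) ls"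
| "section_word y (Bvec n # ls) =
    (if y = 0 then Bvec n else Apow (col_dot n y)) # section_word y ls"

lemma tree_aut_letter_aut: "tree_aut p (letter_aut l)"
  by (cases l) (simp_all add: tree_aut_apow p_pos bvec_def tree_aut_bauto)

lemma tree_aut_word_aut: "tree_aut p (word_aut ws)"
proof (induction ws)
  case Nil
  show ?case unfolding word_aut.simps by (rule tree_aut_id)
next
  case (Cons l ls)
  show ?case unfolding word_aut.simps by (rule tree_aut_comp[OF tree_aut_letter_aut Cons])
qed

lemma word_aut_in_words [simp]: "w \<in> words p \<Longrightarrow> word_aut ws w \<in> words p"
  using tree_aut_word_aut tree_aut_words by blast

lemma word_aut_append: "word_aut (xs @ ys) = word_aut ys \<circ> word_aut xs"
  by (induction xs) auto

lemma word_aut_section: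
  "x < p \<Longrightarrow> w \<in> words p \<Longrightarrow>
    word_aut ws (x # w) = ((x + a_exp ws) mod p) # word_aut (section_word x ws) w"
proof (induction ws arbitrary: x w)
  case (Cons l ls)
  show ?case
  proof (cases l)
    case (Apow k)
    have "(x + k) mod p < p" using p_pos by simp
    then show ?thesis using Cons Apow by (simp add: mod_add_left_eq add.assoc)
  next
    case (Bvec n)
    have "apow p (col_dot n x mod p) w = apow p (col_dot n x) w"
      using Cons.prems by (intro apow_mod) auto
    then show ?thesis using Cons Bvec by (simp add: bvec_eq_bauto bauto_Cons)
  qed
qed simp

lemma word_aut_singleton: "x < p \<Longrightarrow> word_aut ws [x] = [(x + a_exp ws) mod p]"
  using word_aut_section[of x "[]" ws] tree_aut_length[OF tree_aut_word_aut words_Nil] by simp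

lemma length_section_word: "length (section_word x ws) = length (filter (\<lambda>l. \<not> is_Apow l) ws)"
  by (induction x ws rule: section_word.induct) auto

lemma sum_b_exp_sections: "(\<Sum>x<p. b_exp (section_word x ws) i) = b_exp ws i"
proof (induction ws)
  case (Cons l ls)
  show ?case
  proof (cases l)
    case (Apow k)
    then show ?thesis
      using Cons sum_mod_shift[OF p_pos, of "\<lambda>x. b_exp (section_word x ls) i" k] by simp
  next
    case (Bvec n)
    have "(\<Sum>x<p. b_exp (section_word x (Bvec n # ls)) i)
        = (\<Sum>x<p. (if x = 0 then n i else 0) + b_exp (section_word x ls) i)"
      by (rule sum.cong) auto
    also have "\<dots> = n i + b_exp ls i" using Cons p_pos by (simp add: sum.distrib)
    finally show ?thesis using Bvec by simp
  qed
qed simp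

text \<open>The section at \<open>x\<close> receives from each letter \<open>b\<^sup>n\<close> sitting at a vertex \<open>j \<noteq> x\<close> of
  the first level the power \<open>a\<^bsup>n \<cdot> e\<^sub>x\<^sub>-\<^sub>j\<^esup>\<close>.\<close>

lemma a_exp_section_mod:
  "x < p \<Longrightarrow> a_exp (section_word x ws) mod p
    = (\<Sum>j<p. col_dot (b_exp (section_word j ws)) ((x + p - j) mod p)) mod p"
proof (induction ws arbitrary: x)
  case Nil
  then show ?case by (simp add: col_dot_def)
next
  case (Cons l ls)
  show ?case
  proof (cases l)
    case (Apow k)
    define x' where "x' = (x + k) mod p"
    have x': "x' < p" using p_pos by (simp add: x'_def)
    define H where "H j = col_dot (b_exp (section_word j ls)) ((x' + p - j) mod p)" for j
    have "(\<Sum>j<p. col_dot (b_exp (section_word j (l # ls))) ((x + p - j) mod p))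
        = (\<Sum>j<p. H ((j + k) mod p))"
    proof (rule sum.cong)
      fix j assume "j \<in> {..<p}"
      then have "(x + p - j) mod p = (x' + p - (j + k) mod p) mod p"
        using mod_sub_shift[OF p_pos, of j x k] by (simp add: x'_def)
      then show "col_dot (b_exp (section_word j (l # ls))) ((x + p - j) mod p) = H ((j + k) mod p)"
        using Apow by (simp add: H_def)
    qed simp
    also have "\<dots> = (\<Sum>j<p. H j)" by (rule sum_mod_shift[OF p_pos])
    finally show ?thesis using Cons.IH[OF x'] Apow by (simp add: H_def x'_def)
  next
    case (Bvec n)
    have b_exp_section: "b_exp (section_word j (Bvec n # ls))
        = (\<lambda>i. (if j = 0 then n i else 0) + b_exp (section_word j ls) i)" for j
      by auto
    have col_dot_if: "col_dot (\<lambda>i. (if j = 0 then n i else 0) + c i) y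
        = (if j = 0 then col_dot n y else 0) + col_dot c y" for j :: nat and c y
      by (cases "j = 0") (simp_all add: col_dot_add)
    have "(\<Sum>j<p. col_dot (b_exp (section_word j (l # ls))) ((x + p - j) mod p))
        = (\<Sum>j<p. (if j = 0 then col_dot n ((x + p - j) mod p) else 0)
            + col_dot (b_exp (section_word j ls)) ((x + p - j) mod p))"
      unfolding Bvec b_exp_section col_dot_if ..
    also have "\<dots> = col_dot n x + (\<Sum>j<p. col_dot (b_exp (section_word j ls)) ((x + p - j) mod p))"
      using p_pos Cons.prems by (simp add: sum.distrib)
    finally have "(\<Sum>j<p. col_dot (b_exp (section_word j (l # ls))) ((x + p - j) mod p)) mod p
        = (col_dot n x + (\<Sum>j<p. col_dot (b_exp (section_word j ls)) ((x + p - j) mod p)) mod p) mod p"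
      by (simp add: mod_add_right_eq)
    also have "\<dots> = (col_dot n x + a_exp (section_word x ls) mod p) mod p"
      unfolding Cons.IH[OF Cons.prems] ..
    also have "\<dots> = (col_dot n x + a_exp (section_word x ls)) mod p"
      by (rule mod_add_right_eq)
    finally have "(\<Sum>j<p. col_dot (b_exp (section_word j (l # ls))) ((x + p - j) mod p)) mod p
        = (col_dot n x + a_exp (section_word x ls)) mod p" .
    moreover have "a_exp (section_word x (l # ls)) = col_dot n x + a_exp (section_word x ls)"
      using Bvec by (simp add: col_dot_def)
    ultimately show ?thesis by simp
  qed
qed

lemma a_exp_section_B_word:
  "\<forall>l\<in>set ws. \<not> is_Apow l \<Longrightarrow> x \<noteq> 0 \<Longrightarrow> a_exp (section_word x ws) = col_dot (b_exp ws) x"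
proof (induction ws)
  case Nil
  then show ?case by (simp add: col_dot_def)
next
  case (Cons l ls)
  then obtain n where n: "l = Bvec n" by (cases l) auto
  have "b_exp (Bvec n # ls) = (\<lambda>i. n i + b_exp ls i)" by auto
  then show ?case using Cons n by (simp add: col_dot_add)
qed

lemma b_exp_B_word_trivial:
  assumes "\<forall>l\<in>set ws. \<not> is_Apow l" "\<forall>w\<in>words p. word_aut ws w = w" "i < r"
  shows "b_exp ws i mod p = 0"
proof (rule col_dot_eq_zero_imp_zero[OF _ assms(3)])
  fix j assume j: "j \<in> {1..<p}"
  have "word_aut ws [j, 0] = [j, 0]" using assms(2) j p_pos by simp
  then have "word_aut (section_word j ws) [0] = [0]"
    using word_aut_section[of j "[0]" ws] j p_pos by simp
  then have "a_exp (section_word j ws) mod p = 0" using word_aut_singleton[of 0] p_pos by simp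
  then show "col_dot (b_exp ws) j mod p = 0" using a_exp_section_B_word[OF assms(1)] j by simp
qed

lemma b_exp_trivial_word:
  "\<forall>w\<in>words p. word_aut ws w = w \<Longrightarrow> i < r \<Longrightarrow> b_exp ws i mod p = 0"
proof (induction ws arbitrary: i rule: length_induct)
  case (1 ws)
  show ?case
  proof (cases "\<exists>l\<in>set ws. is_Apow l")
    case True
    have "b_exp (section_word x ws) i mod p = 0" if x: "x < p" for x
    proof -
      have "word_aut (section_word x ws) w = w" if "w \<in> words p" for w
        using "1.prems"(1) word_aut_section[OF x that, of ws] x that by simp
      moreover have "length (section_word x ws) < length ws"
        using True unfolding length_section_word by (metis length_filter_less)
      ultimately show ?thesis using "1.IH" "1.prems"(2) by blast
    qed
    then have "(\<Sum>x<p. b_exp (section_word x ws) i mod p) mod p = 0" by simp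
    then show ?thesis by (simp add: mod_sum_eq sum_b_exp_sections)
  next
    case False
    then show ?thesis using b_exp_B_word_trivial "1.prems" by blast
  qed
qed

lemma b_exp_apow_word:
  assumes "\<forall>w\<in>words p. word_aut ws w = apow p c w" "i < r"
  shows "b_exp ws i mod p = 0"
proof -
  have "\<forall>w\<in>words p. word_aut (ws @ [Apow (p - c mod p)]) w = w"
    using assms(1) add_compl_mod_eq_0[OF p_pos, of c] by (simp add: word_aut_append apow_apow apow_mod_zero)
  from b_exp_trivial_word[OF this assms(2)] show ?thesis by (simp add: b_exp_append)
qed

lemma spinal_word_sections:
  assumes "\<forall>w\<in>words p. word_aut ws w = spinal_aut p F w" "w \<in> words p"
  shows "x \<in> {1..<p} \<Longrightarrow> word_aut (section_word x ws) w = apow p (F 0 x) w"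
    and "word_aut (section_word 0 ws) w = spinal_aut p (\<lambda>k. F (Suc k)) w"
proof -
  have "((x + a_exp ws) mod p) # word_aut (section_word x ws) w = spinal_aut p F (x # w)" if "x < p" for x
    using assms word_aut_section[OF that assms(2), of ws] that by simp
  then show "x \<in> {1..<p} \<Longrightarrow> word_aut (section_word x ws) w = apow p (F 0 x) w"
    and "word_aut (section_word 0 ws) w = spinal_aut p (\<lambda>k. F (Suc k)) w"
    using p_pos by fastforce+
qed

lemma spinal_word_b_exp_section:
  assumes "\<forall>w\<in>words p. word_aut ws w = spinal_aut p F w" "x \<in> {1..<p}" "i < r"
  shows "b_exp (section_word x ws) i mod p = 0"
  using b_exp_apow_word spinal_word_sections(1)[OF assms(1) _ assms(2)] assms(3) by blast

lemma spinal_word_b_exp_section_zero: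
  assumes "\<forall>w\<in>words p. word_aut ws w = spinal_aut p F w" "i < r"
  shows "b_exp (section_word 0 ws) i mod p = b_exp ws i mod p"
proof -
  have "(\<Sum>x\<in>{1..<p}. b_exp (section_word x ws) i) mod p
      = (\<Sum>x\<in>{1..<p}. b_exp (section_word x ws) i mod p) mod p"
    by (rule mod_sum_eq[symmetric])
  also have "\<dots> = 0" using spinal_word_b_exp_section[OF assms(1) _ assms(2)] by simp
  finally have "(\<Sum>x\<in>{1..<p}. b_exp (section_word x ws) i) mod p = 0" .
  moreover have "b_exp ws i = b_exp (section_word 0 ws) i + (\<Sum>x\<in>{1..<p}. b_exp (section_word x ws) i)"
    using sum_b_exp_sections[of ws i]
      sum_lessThan_split_zero[OF p_pos, of "\<lambda>x. b_exp (section_word x ws) i"] by simp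
  ultimately show ?thesis by (metis mod_add_right_eq add_0_right)
qed

lemma spinal_word_exponent_zero:
  assumes "\<forall>w\<in>words p. word_aut ws w = spinal_aut p F w" "x \<in> {1..<p}"
  shows "F 0 x mod p = col_dot (b_exp ws) x mod p"
proof -
  have "word_aut (section_word x ws) [0] = [F 0 x mod p]"
    using spinal_word_sections(1)[OF assms(1) _ assms(2), of "[0]"] p_pos by simp
  then have "F 0 x mod p = a_exp (section_word x ws) mod p"
    using word_aut_singleton[of 0 "section_word x ws"] p_pos by simp
  also have "\<dots> = (\<Sum>j<p. col_dot (b_exp (section_word j ws)) ((x + p - j) mod p)) mod p"
    using assms(2) by (intro a_exp_section_mod) simp
  also have "\<dots> = (\<Sum>j<p. col_dot (b_exp (section_word j ws)) ((x + p - j) mod p) mod p) mod p"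
    by (rule mod_sum_eq[symmetric])
  also have "(\<Sum>j<p. col_dot (b_exp (section_word j ws)) ((x + p - j) mod p) mod p)
      = col_dot (b_exp (section_word 0 ws)) x mod p"
  proof -
    have "col_dot (b_exp (section_word j ws)) y mod p = 0" if "j \<in> {1..<p}" for j y
      using col_dot_cong[of "b_exp (section_word j ws)" "\<lambda>i. 0" y]
        spinal_word_b_exp_section[OF assms(1) that] by simp
    then show ?thesis
      using sum_lessThan_split_zero[OF p_pos,
          of "\<lambda>j. col_dot (b_exp (section_word j ws)) ((x + p - j) mod p) mod p"] assms(2)
      by simp
  qed
  also have "col_dot (b_exp (section_word 0 ws)) x mod p mod p = col_dot (b_exp ws) x mod p"
    using col_dot_cong[OF spinal_word_b_exp_section_zero[OF assms(1)]] by simp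
  finally show ?thesis .
qed

lemma spinal_word_exponents:
  "\<forall>w\<in>words p. word_aut ws w = spinal_aut p F w \<Longrightarrow> x \<in> {1..<p} \<Longrightarrow>
    F k x mod p = col_dot (b_exp ws) x mod p"
proof (induction k arbitrary: ws F)
  case 0
  then show ?case by (rule spinal_word_exponent_zero)
next
  case (Suc k)
  have "\<forall>w\<in>words p. word_aut (section_word 0 ws) w = spinal_aut p (\<lambda>k. F (Suc k)) w"
    using spinal_word_sections(2)[OF Suc.prems(1)] by blast
  then have "F (Suc k) x mod p = col_dot (b_exp (section_word 0 ws)) x mod p"
    using Suc.IH Suc.prems(2) by blast
  also have "\<dots> = col_dot (b_exp ws) x mod p"
    by (rule col_dot_cong) (rule spinal_word_b_exp_section_zero[OF Suc.prems(1)])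
  finally show ?case .
qed

lemma spinal_word_eq_bvec:
  assumes "\<forall>w\<in>words p. word_aut ws w = spinal_aut p F w"
  shows "word_aut ws = bvec p r E (\<lambda>i. b_exp ws i mod p)"
proof (rule tree_aut_ext[OF tree_aut_word_aut])
  show "tree_aut p (bvec p r E (\<lambda>i. b_exp ws i mod p))"
    by (simp add: bvec_def tree_aut_bauto p_pos)
  fix w assume w: "w \<in> words p"
  have "F k x mod p = col_dot (\<lambda>i. b_exp ws i mod p) x mod p mod p" if "x \<in> {1..<p}" for k x
  proof -
    have "F k x mod p = col_dot (b_exp ws) x mod p" by (rule spinal_word_exponents[OF assms that])
    also have "\<dots> = col_dot (\<lambda>i. b_exp ws i mod p) x mod p" by (rule col_dot_cong) simp
    finally show ?thesis by simp
  qed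
  from spinal_aut_eq_bauto[OF this w]
  show "word_aut ws w = bvec p r E (\<lambda>i. b_exp ws i mod p) w"
    using assms w by (simp add: bvec_eq_bauto)
qed

section \<open>The group G and conjugation by the diagonal closure\<close>

lemma generators_subset_carrier: "insert (gen_a p) (Bset p r E) \<subseteq> carrier (AutT p)"
  using p_pos by (auto simp: gen_a_eq_apow tree_aut_apow Bset_def bvec_def tree_aut_bauto)

lemma GGS_subgroup: "subgroup (GGS p r E) (AutT p)"
  unfolding GGS_def by (rule group.generate_is_subgroup[OF AutT_group generators_subset_carrier])

lemma GGS_subset_carrier: "GGS p r E \<subseteq> carrier (AutT p)"
  using subgroup.subset[OF GGS_subgroup] .

lemma Bset_subset_GGS: "Bset p r E \<subseteq> GGS p r E"
  unfolding GGS_def by (auto intro: generate.incl)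

lemma apow_in_GGS: "apow p k \<in> GGS p r E"
proof (induction k)
  case 0
  have "apow p 0 = id"
    by (rule tree_aut_ext[OF tree_aut_apow[OF p_pos] tree_aut_id]) (simp add: apow_mod_zero)
  then show ?case using subgroup.one_closed[OF GGS_subgroup] by (simp only: one_AutT)
next
  case (Suc k)
  have "gen_a p \<in> GGS p r E" unfolding GGS_def by (rule generate.incl) simp
  moreover have "apow p (Suc k) = gen_a p \<circ> apow p k"
    by (rule tree_aut_ext[OF tree_aut_apow[OF p_pos] tree_aut_comp[OF tree_aut_apow[OF p_pos]]])
       (simp_all add: gen_a_eq_apow apow_apow tree_aut_apow[OF p_pos])
  ultimately show ?case using subgroup.m_closed[OF GGS_subgroup Suc] by (simp only: mult_AutT)
qed

fun letter_inv :: "gen_letter \<Rightarrow> gen_letter" where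
  "letter_inv (Apow k) = Apow (p - k mod p)"
| "letter_inv (Bvec n) = Bvec (\<lambda>i. p - n i mod p)"

lemma letter_aut_inverse: "w \<in> words p \<Longrightarrow> letter_aut (letter_inv l) (letter_aut l w) = w"
proof (cases l)
  case (Apow k)
  then show "w \<in> words p \<Longrightarrow> ?thesis"
    using add_compl_mod_eq_0[OF p_pos, of k] by (simp add: apow_apow apow_mod_zero)
next
  case (Bvec n)
  have "(col_dot n x mod p + col_dot (\<lambda>i. p - n i mod p) x mod p) mod p = 0" for x
  proof -
    have "(col_dot n x mod p + col_dot (\<lambda>i. p - n i mod p) x mod p) mod p
        = col_dot (\<lambda>i. n i + (p - n i mod p)) x mod p"
      by (simp add: col_dot_add mod_add_eq)
    also have "\<dots> = col_dot (\<lambda>i. 0) x mod p"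
      by (rule col_dot_cong) (use add_compl_mod_eq_0[OF p_pos] in simp)
    finally show ?thesis by simp
  qed
  then show "w \<in> words p \<Longrightarrow> ?thesis" using Bvec by (simp add: bvec_eq_bauto bauto_bauto)
qed

lemma inv_word_aut: "inv\<^bsub>AutT p\<^esub> (word_aut ws) = word_aut (rev (map letter_inv ws))"
proof (rule inv_AutT[OF tree_aut_word_aut tree_aut_word_aut])
  fix w assume "w \<in> words p"
  then show "word_aut (rev (map letter_inv ws)) (word_aut ws w) = w"
  proof (induction ws arbitrary: w)
    case (Cons l ls)
    then show ?case
      using tree_aut_words[OF tree_aut_letter_aut] by (simp add: word_aut_append letter_aut_inverse)
  qed simp
qed

lemma generator_eq_word_aut:
  assumes "h \<in> insert (gen_a p) (Bset p r E)"
  shows "\<exists>ws. h = word_aut ws"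
proof -
  have "word_aut [l] = letter_aut l" for l by simp
  moreover obtain l where "h = letter_aut l"
    using assms by (auto simp: Bset_def gen_a_eq_apow intro: letter_aut.simps[symmetric])
  ultimately show ?thesis by metis
qed

lemma GGS_eq_word_aut: "g \<in> GGS p r E \<Longrightarrow> \<exists>ws. g = word_aut ws"
  unfolding GGS_def
proof (induction rule: generate.induct)
  case one
  show ?case by (rule exI[of _ "[]"]) simp
next
  case (incl h)
  then show ?case by (rule generator_eq_word_aut)
next
  case (inv h)
  then obtain ws where "h = word_aut ws" using generator_eq_word_aut by blast
  then show ?case using inv_word_aut by blast
next
  case (eng h1 h2)
  then obtain ws1 ws2 where "h1 = word_aut ws1" "h2 = word_aut ws2" by blast
  then have "h1 \<otimes>\<^bsub>AutT p\<^esub> h2 = word_aut (ws1 @ ws2)" by (simp add: word_aut_append)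
  then show ?case by blast
qed

lemma scale_conj_bvec_in_GGS_imp_Bset:
  assumes "inverse_seqs p m m'" "b \<in> Bset p r E"
    and "scale_aut p m \<circ> b \<circ> scale_aut p m' \<in> GGS p r E"
  shows "scale_aut p m \<circ> b \<circ> scale_aut p m' \<in> Bset p r E"
proof -
  obtain n where b: "b = bauto p (\<lambda>j. (\<Sum>i<r. n i * E i j) mod p)"
    using assms(2) by (auto simp: Bset_def bvec_def)
  obtain ws where ws: "scale_aut p m \<circ> b \<circ> scale_aut p m' = word_aut ws"
    using GGS_eq_word_aut[OF assms(3)] by blast
  have "\<forall>w\<in>words p. word_aut ws w
      = spinal_aut p (\<lambda>k x. m (Suc k) * ((\<Sum>i<r. n i * E i ((m' k * x) mod p)) mod p)) w"
    using scale_conj_bauto[OF p_pos assms(1)] unfolding ws[symmetric] b by blast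
  then have "scale_aut p m \<circ> b \<circ> scale_aut p m' = bvec p r E (\<lambda>i. b_exp ws i mod p)"
    unfolding ws by (rule spinal_word_eq_bvec)
  then show ?thesis using p_pos by (auto simp: Bset_def)
qed

lemma scale_conj_closed_GGS_iff_Bset:
  assumes "inverse_seqs p m m'"
  shows "(\<forall>g\<in>GGS p r E. scale_aut p m \<circ> g \<circ> scale_aut p m' \<in> GGS p r E) \<longleftrightarrow>
    (\<forall>b\<in>Bset p r E. scale_aut p m \<circ> b \<circ> scale_aut p m' \<in> Bset p r E)"
proof
  assume "\<forall>g\<in>GGS p r E. scale_aut p m \<circ> g \<circ> scale_aut p m' \<in> GGS p r E"
  then show "\<forall>b\<in>Bset p r E. scale_aut p m \<circ> b \<circ> scale_aut p m' \<in> Bset p r E"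
    using Bset_subset_GGS scale_conj_bvec_in_GGS_imp_Bset[OF assms] by blast
next
  assume B: "\<forall>b\<in>Bset p r E. scale_aut p m \<circ> b \<circ> scale_aut p m' \<in> Bset p r E"
  have d: "scale_aut p m \<in> carrier (AutT p)" using tree_aut_scale_aut[OF p_pos assms] by simp
  have conj: "inv\<^bsub>AutT p\<^esub> scale_aut p m \<otimes>\<^bsub>AutT p\<^esub> h \<otimes>\<^bsub>AutT p\<^esub> scale_aut p m
      = scale_aut p m \<circ> h \<circ> scale_aut p m'" for h
    by (simp only: inv_scale_aut[OF p_pos assms] mult_AutT comp_assoc)
  have "scale_aut p m \<circ> s \<circ> scale_aut p m' \<in> GGS p r E" if "s \<in> insert (gen_a p) (Bset p r E)" for s
    using that B Bset_subset_GGS scale_conj_apow[OF p_pos assms, of 1] apow_in_GGS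
    by (auto simp: gen_a_eq_apow)
  then show "\<forall>g\<in>GGS p r E. scale_aut p m \<circ> g \<circ> scale_aut p m' \<in> GGS p r E"
    using group.conj_generate_closed[OF AutT_group d generators_subset_carrier]
    unfolding GGS_def conj by blast
qed

lemma Dbar_normalises_GGS_iff_Bset:
  assumes "d \<in> Dbar p"
  shows "normalises p d (GGS p r E) \<longleftrightarrow> normalises p d (Bset p r E)"
proof -
  obtain m m' where mm': "inverse_seqs p m m'" and d: "d = scale_aut p m"
    using Dbar_eq_scale_aut_inverse[OF prime_p assms] by blast
  have "Bset p r E \<subseteq> carrier (AutT p)" using Bset_subset_GGS GGS_subset_carrier by blast
  show ?thesis
    unfolding d normalises_scale_aut_iff[OF p_pos mm' GGS_subset_carrier]
      normalises_scale_aut_iff[OF p_pos mm' \<open>Bset p r E \<subseteq> carrier (AutT p)\<close>]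
      scale_conj_closed_GGS_iff_Bset[OF mm'] scale_conj_closed_GGS_iff_Bset[OF inverse_seqs_sym[OF mm']]
    ..
qed

end

theorem mainTheorem17:
  fixes p r :: nat and E :: "nat \<Rightarrow> nat \<Rightarrow> nat"
  assumes "prime (p::nat)" and "odd p" and "r \<ge> 1"
    and "basis_matrix p r E"
    and "row_space p r E \<noteq> const_space p"
  shows "{d \<in> Dbar p. normalises p d (GGS p r E)} = {d \<in> Dbar p. normalises p d (Bset p r E)}"
proof -
  interpret multi_ggs p r E using assms(1,4) by unfold_locales
  show ?thesis using Dbar_normalises_GGS_iff_Bset by blast
qed

end
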